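(* Let $U$ be a countably infinite universe and $\mathcal{C}=(L_1,L_2,\ldots)$ a countably infinite collection of languages over $U$, and consider the Noisy Procedure in the context. At every execution of step (A), the sizes of the finite sets $T\subseteq U$ satisfying the conditions of step (A) are bounded above (so a largest such $T$ exists whenever some such $T$ exists). In particular, $m^\star_n(L_i)<\infty$ for every $n\ge0$ and $i\ge1$.
   Context: A language is an infinite subset of $U$; a collection is a sequence of languages (repetitions allowed, entries distinguished by index). For a set $T$, language $L$ and integer $a\ge0$, $T$ is $a$-contained in $L$ if $\sum_{x\in T}\mathbf{1}[x\notin L]\le a$. Diagonal order: pairs $(n,i)$, $n\ge0$, $i\ge1$, ordered as $(0,1),(1,1),(0,2),(2,1),(1,2),(0,3),\ldots$, i.e. for $n'=0,1,2,\ldots$ and $h=0,\ldots,n'$ the pair $(n'-h,h+1)$. Each pair $(a,b)$ has an entry $L_{a,b}$, a copy of $L_b$ labelled $(a,b)$. Noisy Procedure. Set $\mathcal{C}'_0=()$. For $l=1,2,\ldots$, let $(n,i)$ be the $l$-th pair; append $L_{n,i}$ to the end of $\mathcal{C}'_{l-1}$ to get $\mathcal{C}'_l=(L'_1,\ldots,L'_l)$, set $j=l$. Repeat: (A) consider finite sets $T\subseteq U$ for which there is a subcollection $\mathcal{D}$ of the entries $(L'_1,\ldots,L'_j)$ such that $\mathcal{D}$ includes $L'_j$, $T$ is $a$-contained in $L_b$ for every entry $L_{a,b}\in\mathcal{D}$, and $\bigcap_{L_{a,b}\in\mathcal{D}}L_b$ is finite; let $T$ be such a set of largest size, $\mathcal{C}_{\mathrm{chk}}$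 a corresponding $\mathcal{D}$, and $m_{\mathrm{chk}}=|T|$ ($0$ if no such $\mathcal{D}$ exists). (B) If $j\le1$ or $m_{\mathrm{chk}}>m^\star_a(L_b)$ where $L'_{j-1}=L_{a,b}$, stop. (C) Otherwise swap positions $j-1,j$, set $j\leftarrow j-1$, return to (A). On stopping, set $T(L_{n,i})=T$, $\mathcal{C}(L_{n,i})=\mathcal{C}_{\mathrm{chk}}$, $m^\star_n(L_i)=m_{\mathrm{chk}}$. *)

theory Defs
  imports Main "HOL-Library.Extended_Nat" "HOL-Library.Countable_Set"
begin

text \<open>Entries of the collection are identified with their labels (a,b) :: nat \<times> nat,
  the entry L_{a,b} being a copy of L b.  Positions in lists are 0-indexed.\<close>

text \<open>Diagonal order, 0-indexed: diag k is the (k+1)-th pair.\<close>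
fun diag :: "nat \<Rightarrow> nat \<times> nat" where
  "diag 0 = (0, 1)"
| "diag (Suc k) = (case diag k of (n, i) \<Rightarrow> if n = 0 then (i, 1) else (n - 1, i + 1))"

text \<open>0-indexed position of the pair (n,i) (i \<ge> 1) in the diagonal order.\<close>
definition diag_index :: "nat \<Rightarrow> nat \<Rightarrow> nat" where
  "diag_index n i = (n + i - 1) * (n + i) div 2 + (i - 1)"

definition acont :: "nat \<Rightarrow> 'u set \<Rightarrow> 'u set \<Rightarrow> bool" where
  "acont a T L \<longleftrightarrow> (\<Sum>x\<in>T. (if x \<notin> L then 1 else 0 :: nat)) \<le> a"

text \<open>Finite sets T admissible in step (A) for the current list ys and position j
  (1-indexed, so the entry L'_j is ys ! (j-1) and L'_1..L'_j are take j ys).\<close>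
definition admissible :: "'u set \<Rightarrow> (nat \<Rightarrow> 'u set) \<Rightarrow> (nat \<times> nat) list \<Rightarrow> nat \<Rightarrow> 'u set set" where
  "admissible U L ys j = {T. finite T \<and> T \<subseteq> U \<and>
     (\<exists>D. D \<subseteq> set (take j ys) \<and> ys ! (j - 1) \<in> D \<and>
          (\<forall>(a, b)\<in>D. acont a T (L b)) \<and> finite (\<Inter>(a, b)\<in>D. L b))}"

text \<open>m_chk: the largest size (0 if no admissible set); taken in enat so that it is
  defined without presupposing the boundedness claimed by the theorem.\<close>
definition mchk :: "'u set \<Rightarrow> (nat \<Rightarrow> 'u set) \<Rightarrow> (nat \<times> nat) list \<Rightarrow> nat \<Rightarrow> enat" where
  "mchk U L ys j = Sup ((\<lambda>T. enat (card T)) ` admissible U L ys j)"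

text \<open>Stopping test of step (B); m gives the values m*_a(L_b) of already processed entries.\<close>
definition stops :: "'u set \<Rightarrow> (nat \<Rightarrow> 'u set) \<Rightarrow> (nat \<times> nat \<Rightarrow> enat) \<Rightarrow> (nat \<times> nat) list \<Rightarrow> nat \<Rightarrow> bool" where
  "stops U L m ys j \<longleftrightarrow> j \<le> 1 \<or> mchk U L ys j > m (ys ! (j - 2))"

definition swap_adj :: "'a list \<Rightarrow> nat \<Rightarrow> 'a list" where
  "swap_adj ys j = ys[j - 2 := ys ! (j - 1), j - 1 := ys ! (j - 2)]"

text \<open>The inner repeat loop (A)-(B)-(C); returns final list, final position, and m_chk.\<close>
function loop :: "'u set \<Rightarrow> (nat \<Rightarrow> 'u set) \<Rightarrow> (nat \<times> nat \<Rightarrow> enat) \<Rightarrow> (nat \<times> nat) list \<Rightarrow> nat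
    \<Rightarrow> (nat \<times> nat) list \<times> nat \<times> enat" where
  "loop U L m ys j = (if stops U L m ys j then (ys, j, mchk U L ys j)
                      else loop U L m (swap_adj ys j) (j - 1))"
  by pat_completeness auto
termination
  by (relation "measure (\<lambda>(U, L, m, ys, j). j)") (auto simp: stops_def)

text \<open>State after l rounds: the collection C'_l (as list of labels) and the map of m* values
  assigned so far (0 for entries not yet processed).\<close>
fun state :: "'u set \<Rightarrow> (nat \<Rightarrow> 'u set) \<Rightarrow> nat \<Rightarrow> (nat \<times> nat) list \<times> (nat \<times> nat \<Rightarrow> enat)" where
  "state U L 0 = ([], (\<lambda>_. 0))"
| "state U L (Suc l) = (let (xs, m) = state U L l; p = diag l;
                            (ys, j, c) = loop U L m (xs @ [p]) (length xs + 1)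
                        in (ys, m(p := c)))"

text \<open>executedA U L l ys j: during round l (1-indexed), step (A) is executed with current
  collection ys and position j.\<close>
inductive executedA :: "'u set \<Rightarrow> (nat \<Rightarrow> 'u set) \<Rightarrow> nat \<Rightarrow> (nat \<times> nat) list \<Rightarrow> nat \<Rightarrow> bool"
  for U L where
  start: "state U L l = (xs, m) \<Longrightarrow> executedA U L (Suc l) (xs @ [diag l]) (length xs + 1)"
| step: "executedA U L (Suc l) ys j \<Longrightarrow> state U L l = (xs, m) \<Longrightarrow> \<not> stops U L m ys j
          \<Longrightarrow> executedA U L (Suc l) (swap_adj ys j) (j - 1)"

definition mstar :: "'u set \<Rightarrow> (nat \<Rightarrow> 'u set) \<Rightarrow> nat \<Rightarrow> nat \<Rightarrow> enat" where
  "mstar U L n i = snd (state U L (Suc (diag_index n i))) (n, i)"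

end

theory Submission
  imports Defs
begin

text \<open>If \<open>T\<close> is \<open>a\<^sub>d\<close>-contained in \<open>X\<^sub>d\<close> for every \<open>d \<in> D\<close>, then every element of \<open>T\<close> lies
  in \<open>\<Inter>\<^sub>d X\<^sub>d\<close> or is one of the at most \<open>\<Sum>\<^sub>d a\<^sub>d\<close> exceptions, so
  \<open>|T| \<le> |\<Inter>\<^sub>d X\<^sub>d| + \<Sum>\<^sub>d a\<^sub>d\<close>. Since \<open>D\<close> ranges over subsets of the finite current
  collection, this gives a bound independent of \<open>T\<close>; hence every value \<open>m_chk\<close>, and in
  particular every \<open>m\<^sup>\<star>\<^sub>n(L\<^sub>i)\<close>, is finite.\<close>

lemma acont_iff_card_diff:
  assumes "finite T"
  shows "acont a T X \<longleftrightarrow> card (T - X) \<le> a"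
proof -
  have "(\<Sum>x\<in>T. (if x \<notin> X then 1 else 0 :: nat)) = card (T - X)"
    using sum.inter_filter[OF assms, of "\<lambda>_. 1::nat" "\<lambda>x. x \<notin> X"]
    by (simp add: set_diff_eq)
  then show ?thesis unfolding acont_def by simp
qed

lemma card_le_card_INT_plus_sum:
  assumes "finite T" "finite D" "finite (\<Inter>d\<in>D. X d)"
    and "\<And>d. d \<in> D \<Longrightarrow> card (T - X d) \<le> a d"
  shows "card T \<le> card (\<Inter>d\<in>D. X d) + (\<Sum>d\<in>D. a d)"
proof -
  have "T \<subseteq> (\<Inter>d\<in>D. X d) \<union> (\<Union>d\<in>D. T - X d)" by auto
  then have "card T \<le> card ((\<Inter>d\<in>D. X d) \<union> (\<Union>d\<in>D. T - X d))"
    by (rule card_mono[rotated]) (use assms in simp)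
  also have "\<dots> \<le> card (\<Inter>d\<in>D. X d) + card (\<Union>d\<in>D. T - X d)"
    by (rule card_Un_le)
  also have "card (\<Union>d\<in>D. T - X d) \<le> (\<Sum>d\<in>D. card (T - X d))"
    using card_UN_le[OF assms(2)] .
  also have "\<dots> \<le> (\<Sum>d\<in>D. a d)"
    using assms(4) by (rule sum_mono)
  finally show ?thesis by simp
qed

lemma admissible_card_bounded:
  "\<exists>B. \<forall>T\<in>admissible U L ys j. card T \<le> B"
proof -
  let ?X = "\<lambda>(a, b). L b"
  define F where "F = {D. D \<subseteq> set ys \<and> finite (\<Inter>d\<in>D. ?X d)}"
  have "finite F"
    by (rule finite_subset[of _ "Pow (set ys)"]) (auto simp: F_def)
  define B where "B = (\<Sum>D\<in>F. card (\<Inter>d\<in>D. ?X d)) + (\<Sum>d\<in>set ys. fst d)"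
  have "card T \<le> B" if "T \<in> admissible U L ys j" for T
  proof -
    have T: "finite T" and "\<exists>D. D \<subseteq> set (take j ys) \<and> ys ! (j - 1) \<in> D \<and>
        (\<forall>(a, b)\<in>D. acont a T (L b)) \<and> finite (\<Inter>d\<in>D. ?X d)"
      using that unfolding admissible_def by simp_all
    then obtain D where D: "D \<subseteq> set (take j ys)" "\<forall>(a, b)\<in>D. acont a T (L b)"
      "finite (\<Inter>d\<in>D. ?X d)"
      by blast
    have "D \<subseteq> set ys" using D(1) set_take_subset by fast
    then have "D \<in> F" "finite D" using D(3) finite_subset by (auto simp: F_def)
    have "card T \<le> card (\<Inter>d\<in>D. ?X d) + (\<Sum>d\<in>D. fst d)"
    proof (rule card_le_card_INT_plus_sum[OF T \<open>finite D\<close> D(3)])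
      fix d assume "d \<in> D"
      then show "card (T - ?X d) \<le> fst d"
        using D(2) acont_iff_card_diff[OF T] by (cases d) auto
    qed
    also have "card (\<Inter>d\<in>D. ?X d) \<le> (\<Sum>D\<in>F. card (\<Inter>d\<in>D. ?X d))"
      by (rule member_le_sum[OF \<open>D \<in> F\<close> _ \<open>finite F\<close>]) simp
    also have "(\<Sum>d\<in>D. fst d) \<le> (\<Sum>d\<in>set ys. fst d)"
      using \<open>D \<subseteq> set ys\<close> by (intro sum_mono2) auto
    finally show ?thesis by (simp add: B_def)
  qed
  then show ?thesis by blast
qed

lemma bdd_above_card_admissible: "bdd_above (card ` admissible U L ys j)"
proof -
  obtain B where "\<forall>T\<in>admissible U L ys j. card T \<le> B"
    using admissible_card_bounded by blast
  then show ?thesis by (auto intro: bdd_aboveI)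
qed

lemma mchk_finite: "mchk U L ys j \<noteq> \<infinity>"
proof -
  obtain B where "\<forall>T\<in>admissible U L ys j. card T \<le> B"
    using admissible_card_bounded by blast
  then have "mchk U L ys j \<le> enat B"
    unfolding mchk_def by (auto intro: Sup_least)
  then show ?thesis by (cases "mchk U L ys j") auto
qed

lemma loop_mchk_finite: "snd (snd (loop U L m ys j)) \<noteq> \<infinity>"
proof (induction U L m ys j rule: loop.induct)
  case (1 U L m ys j)
  then show ?case
    using mchk_finite[of U L ys j] by (subst loop.simps) simp
qed

lemma state_values_finite: "snd (state U L l) p \<noteq> \<infinity>"
proof (induction l arbitrary: p)
  case 0
  then show ?case by simp
next
  case (Suc l)
  obtain xs m where s: "state U L l = (xs, m)" by fastforce
  obtain ys j c where lp: "loop U L m (xs @ [diag l]) (length xs + 1) = (ys, j, c)"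
    by (metis prod.exhaust)
  have "c \<noteq> \<infinity>" using loop_mchk_finite[of U L m "xs @ [diag l]" "length xs + 1"] lp by simp
  moreover have "m q \<noteq> \<infinity>" for q using Suc[of q] s by simp
  ultimately show ?case using s lp by simp
qed

theorem mainTheorem13:
  fixes U :: "'u set" and L :: "nat \<Rightarrow> 'u set"
  assumes "countable U" and "infinite U"
    and "\<forall>i\<ge>1. L i \<subseteq> U \<and> infinite (L i)"
  shows "(\<forall>l ys j. executedA U L l ys j \<longrightarrow> bdd_above (card ` admissible U L ys j))
       \<and> (\<forall>n i. i \<ge> 1 \<longrightarrow> mstar U L n i \<noteq> \<infinity>)"
  unfolding mstar_def
  by (intro conjI allI impI bdd_above_card_admissible state_values_finite)

end
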